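(* Let $f_A, f_R$ and $F$ be as in the context, with $\chi = 1$ (so that $F(d,T) = (f_A+f_R)(|d|)\,d$). For $R>0$, the ring state $\delta_{(R,0)}$ (the uniform probability measure on the circle of radius $R$ centred at the origin) is a nontrivial equilibrium state of the mean-field equation $\partial_t\rho + \nabla\cdot[\rho\,(F(\cdot,T)\ast\rho)] = 0$ if and only if $$\int_0^{\pi} (f_A+f_R)\Big(R\sqrt{(1-\cos\phi)^2+\sin^2\phi}\Big)\,(1-\cos\phi)\,d\phi = 0 .$$
   Context: Let $f_R, f_A:[0,\infty)\to\mathbb{R}$ be smooth integrable functions with $f_R\ge 0$ and $f_A\le 0$, such that there is $d_a>0$ with $(f_A+f_R)(\rho)\le 0$ for $\rho>d_a$ and $(f_A+f_R)(\rho)>0$ for $0\le\rho<d_a$. For $\chi\in[0,1]$, $s=(0,1)$, $l=(1,0)$, let $T=\chi\, s\otimes s + l\otimes l$ and define the interaction force $F(d,T) = f_A(|d|)\,T d + f_R(|d|)\,d$ for $d\in\mathbb{R}^2$; assume $F$ is $C^1$ with bounded total derivatives in both arguments. Assume moreover there is $d_e>d_a$ such that $\chi f_A+f_R$ is strictly decreasing on $[0,d_e]$ for all $\chi\in[0,1]$. A Borel probability measure $\mu$ on $\mathbb{R}^2$ is an equilibrium state of the mean-field equation if $K(x):=(F(\cdot,T)\ast\mu)(x)=\int_{\mathbb{R}^2}F(x-y,T)\,d\mu(y)$ satisfies $K\in L^1_{loc}(d\mu)$ and $K=0$ on $\mathrm{supp}(\mu)$ $\mu$-a.e. For $R>0$,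 $r\ge 0$, the ellipse state $\delta_{(R,r)}$ is the probability measure uniformly distributed on $\{(R\cos\phi,(R+r)\sin\phi):\phi\in[0,2\pi)\}$; $\delta_{(R,0)}$ is the ring state of radius $R$. *)

theory Defs
  imports "HOL-Analysis.Analysis" "HOL-Probability.Probability"
begin

definition smooth_on_real :: "real set \<Rightarrow> (real \<Rightarrow> real) \<Rightarrow> bool" where
  "smooth_on_real S f \<longleftrightarrow>
     (\<exists>D :: nat \<Rightarrow> real \<Rightarrow> real. D 0 = f \<and>
        (\<forall>n. \<forall>x\<in>S. (D n has_real_derivative D (Suc n) x) (at x within S)))"

definition vec_s :: "real^2" where "vec_s = vector [0, 1]"
definition vec_l :: "real^2" where "vec_l = vector [1, 0]"

definition outer :: "real^2 \<Rightarrow> real^2 \<Rightarrow> real^2^2" where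
  "outer a b = (\<chi> i j. a $ i * b $ j)"

definition Tmat :: "real \<Rightarrow> real^2^2" where
  "Tmat chi = chi *\<^sub>R outer vec_s vec_s + outer vec_l vec_l"

definition Fforce :: "(real \<Rightarrow> real) \<Rightarrow> (real \<Rightarrow> real) \<Rightarrow> real^2^2 \<Rightarrow> real^2 \<Rightarrow> real^2" where
  "Fforce fA fR T d = fA (norm d) *\<^sub>R (T *v d) + fR (norm d) *\<^sub>R d"

definition msupport :: "(real^2) measure \<Rightarrow> (real^2) set" where
  "msupport \<mu> = {x. \<forall>e>0. emeasure \<mu> (ball x e) > 0}"

definition Kfield :: "(real \<Rightarrow> real) \<Rightarrow> (real \<Rightarrow> real) \<Rightarrow> real^2^2 \<Rightarrow> (real^2) measure \<Rightarrow> real^2 \<Rightarrow> real^2" where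
  "Kfield fA fR T \<mu> x = (\<integral>y. Fforce fA fR T (x - y) \<partial>\<mu>)"

definition equilibrium_state :: "(real \<Rightarrow> real) \<Rightarrow> (real \<Rightarrow> real) \<Rightarrow> real^2^2 \<Rightarrow> (real^2) measure \<Rightarrow> bool" where
  "equilibrium_state fA fR T \<mu> \<longleftrightarrow>
     prob_space \<mu> \<and> sets \<mu> = sets borel \<and>
     (AE x in \<mu>. integrable \<mu> (\<lambda>y. Fforce fA fR T (x - y))) \<and>
     (\<forall>C. compact C \<longrightarrow> set_integrable \<mu> C (Kfield fA fR T \<mu>)) \<and>
     (AE x in \<mu>. x \<in> msupport \<mu> \<longrightarrow> Kfield fA fR T \<mu> x = 0)"

definition nontrivial_state :: "(real^2) measure \<Rightarrow> bool" where
  "nontrivial_state \<mu> \<longleftrightarrow> \<not> (\<exists>p. \<mu> = return borel p)"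

definition ellipse_state :: "real \<Rightarrow> real \<Rightarrow> (real^2) measure" where
  "ellipse_state R r = distr (uniform_measure lborel {0..<2*pi}) borel
      (\<lambda>\<phi>. vector [R * cos \<phi>, (R + r) * sin \<phi>])"

end

theory Submission
  imports Defs
begin

text \<open>
  For \<open>\<chi> = 1\<close> the matrix \<open>T\<close> is the identity, so the force is radial, \<open>F(d) = g(|d|) d\<close> with
  \<open>g = f\<^sub>A + f\<^sub>R\<close>. Seen from the ring point at angle \<open>\<theta>\<close>, the point at angle \<open>\<phi>\<close> is displaced by
  \<open>R((1 - cos \<psi>) u + sin \<psi> w)\<close>, \<open>\<psi> = \<phi> - \<theta>\<close>, in an orthonormal frame \<open>(u, w)\<close> at \<open>\<theta>\<close>, and its
  length depends on \<open>\<psi>\<close> only. Shifting the period, the field at that point is the average over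
  \<open>\<psi>\<close> of \<open>R g(chord \<psi>)((1 - cos \<psi>) u + sin \<psi> w)\<close>: the sine part is odd and drops out, the
  cosine part is even, leaving \<open>(R/\<pi>) I u\<close> with \<open>I\<close> the integral in the statement. Every ring
  point lies in the support and \<open>u \<noteq> 0\<close>, so the ring is an equilibrium iff \<open>I = 0\<close>; and it is
  never a Dirac mass.
\<close>

lemma integral_periodic_shift:
  fixes f :: "real \<Rightarrow> real"
  assumes cont: "continuous_on UNIV f" and per: "\<And>x. f (x + p) = f x"
    and "0 \<le> \<theta>" "\<theta> \<le> p"
  shows "integral {0..p} (\<lambda>x. f (x - \<theta>)) = integral {0..p} f"
proof -
  have int: "f integrable_on {c..d}" for c d
    by (rule integrable_continuous_interval) (rule continuous_on_subset[OF cont], simp)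
  have "integral {0..p} (\<lambda>x. f (x - \<theta>)) = integral {-\<theta>..p-\<theta>} f"
    using integral_shift_real_ivl[of "0 - \<theta>" "-\<theta>" "p - \<theta>" f] by simp
  also have "\<dots> = integral {-\<theta>..0} f + integral {0..p-\<theta>} f"
    using Henstock_Kurzweil_Integration.integral_combine[of "-\<theta>" 0 "p-\<theta>" f] assms int by simp
  also have "integral {-\<theta>..0} f = integral {p-\<theta>..p} f"
    using integral_shift_real_ivl[of "p-\<theta>" p p f] per by simp
  also have "integral {p-\<theta>..p} f + integral {0..p-\<theta>} f = integral {0..p} f"
    using Henstock_Kurzweil_Integration.integral_combine[of 0 "p-\<theta>" p f] assms int by simp
  finally show ?thesis .
qed

lemma integral_periodic_reflect:
  fixes f :: "real \<Rightarrow> real"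
  assumes cont: "continuous_on UNIV f" and per: "\<And>x. f (x + 2*a) = f x"
    and reflect: "\<And>x. f (-x) = s * f x" and "a \<ge> 0"
  shows "integral {0..2*a} f = (1 + s) * integral {0..a} f"
proof -
  have int: "f integrable_on {c..d}" for c d
    by (rule integrable_continuous_interval) (rule continuous_on_subset[OF cont], simp)
  have "integral {0..2*a} f = integral {0..a} f + integral {a..2*a} f"
    using Henstock_Kurzweil_Integration.integral_combine[of 0 a "2*a" f] int \<open>a \<ge> 0\<close> by simp
  also have "integral {a..2*a} f = integral {-a..0} f"
    using integral_shift_real_ivl[of a "2*a" "2*a" f] per by simp
  also have "\<dots> = integral {0..a} (\<lambda>y. f (-y))"
    using Henstock_Kurzweil_Integration.integral_reflect_real[of a 0 "\<lambda>y. f (-y)"] by simp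
  also have "\<dots> = s * integral {0..a} f" by (simp add: reflect)
  finally show ?thesis by (simp add: algebra_simps)
qed

lemma
  fixes f :: "real \<Rightarrow> 'a::euclidean_space"
  assumes cont: "continuous_on UNIV f" and "a < b"
  shows integrable_uniform_measure_interval: "integrable (uniform_measure lborel {a..<b}) f"
    and integral_uniform_measure_interval:
      "integral\<^sup>L (uniform_measure lborel {a..<b}) f = (1 / (b - a)) *\<^sub>R integral {a..b} f"
proof -
  have f_meas[measurable]: "f \<in> borel_measurable borel"
    using cont by (rule borel_measurable_continuous_onI)
  have U: "uniform_measure lborel {a..<b} = density lborel (\<lambda>x. ennreal (indicator {a..<b} x / (b - a)))"
    unfolding uniform_measure_def using \<open>a < b\<close>
    by (intro arg_cong2[where f=density] ext refl) (use divide_ennreal[of 1 "b - a"] in \<open>simp add: indicator_def\<close>)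
  have ae: "AE x in lborel. (indicator {a..<b} x / (b - a)) *\<^sub>R f x
      = (1 / (b - a)) *\<^sub>R (indicator {a..b} x *\<^sub>R f x)"
    using AE_lborel_singleton[of b] by eventually_elim (auto simp: indicator_def)
  have f_int: "integrable lborel (\<lambda>x. indicator {a..b} x *\<^sub>R f x)"
    by (rule borel_integrable_compact) (auto intro: continuous_on_subset[OF cont])
  then have "integrable lborel (\<lambda>x. (1 / (b - a)) *\<^sub>R (indicator {a..b} x *\<^sub>R f x))"
    by (rule integrable_scaleR_right)
  then have "integrable lborel (\<lambda>x. (indicator {a..<b} x / (b - a)) *\<^sub>R f x)"
    using integrable_cong_AE[OF _ _ ae] by simp
  then show "integrable (uniform_measure lborel {a..<b}) f"
    unfolding U using \<open>a < b\<close> by (subst integrable_density) auto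
  have "integral\<^sup>L (uniform_measure lborel {a..<b}) f
      = integral\<^sup>L lborel (\<lambda>x. (indicator {a..<b} x / (b - a)) *\<^sub>R f x)"
    unfolding U using \<open>a < b\<close> by (subst integral_density) auto
  also have "\<dots> = integral\<^sup>L lborel (\<lambda>x. (1 / (b - a)) *\<^sub>R (indicator {a..b} x *\<^sub>R f x))"
    by (rule integral_cong_AE[OF _ _ ae]) auto
  also have "\<dots> = (1 / (b - a)) *\<^sub>R integral\<^sup>L lborel (\<lambda>x. indicator {a..b} x *\<^sub>R f x)"
    by (rule integral_scaleR_right)
  also have "integral\<^sup>L lborel (\<lambda>x. indicator {a..b} x *\<^sub>R f x) = integral {a..b} f"
    using set_borel_integral_eq_integral(2)[of "{a..b}" f] f_int
    unfolding set_integrable_def set_lebesgue_integral_def by simp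
  finally show "integral\<^sup>L (uniform_measure lborel {a..<b}) f = (1 / (b - a)) *\<^sub>R integral {a..b} f" .
qed

lemma AE_uniform_measure_interval_iff:
  fixes a b :: real
  assumes "a < b" and PQ: "\<And>x. x \<in> {a..<b} \<Longrightarrow> P x \<longleftrightarrow> Q"
  shows "(AE x in uniform_measure lborel {a..<b}. P x) \<longleftrightarrow> Q"
proof
  assume AE_P: "AE x in uniform_measure lborel {a..<b}. P x"
  show Q
  proof (rule ccontr)
    assume "\<not> Q"
    then have "AE x in uniform_measure lborel {a..<b}. \<not> P x"
      using PQ by (intro AE_uniform_measureI) auto
    with AE_P have "AE x in uniform_measure lborel {a..<b}. False"
      by eventually_elim simp
    then show False
      using prob_space.AE_False[OF prob_space_uniform_measure, of lborel "{a..<b}"] \<open>a < b\<close> by simp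
  qed
qed (use PQ in \<open>auto intro: AE_uniform_measureI\<close>)

lemma closed_msupport:
  assumes sets_\<mu>: "sets \<mu> = sets borel"
  shows "closed (msupport \<mu>)"
  unfolding closed_def open_contains_ball
proof safe
  fix x assume "x \<notin> msupport \<mu>"
  then obtain e where "e > 0" and null: "emeasure \<mu> (ball x e) = 0"
    by (auto simp: msupport_def)
  have "y \<notin> msupport \<mu>" if "y \<in> ball x (e/2)" for y
  proof -
    have "ball y (e/2) \<subseteq> ball x e"
      using that by (simp add: ball_subset_ball_iff dist_commute)
    then have "emeasure \<mu> (ball y (e/2)) \<le> emeasure \<mu> (ball x e)"
      using sets_\<mu> by (intro emeasure_mono) auto
    with null \<open>e > 0\<close> show ?thesis
      by (auto simp: msupport_def intro!: exI[of _ "e/2"])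
  qed
  with \<open>e > 0\<close> show "\<exists>e>0. ball x e \<subseteq> - msupport \<mu>"
    by (intro exI[of _ "e/2"]) auto
qed

lemma msupport_return_borel:
  assumes "x \<in> msupport (return borel p)"
  shows "x = p"
proof (rule ccontr)
  assume "x \<noteq> p"
  then have "dist x p > 0" by simp
  with assms have "emeasure (return borel p) (ball x (dist x p)) > 0"
    unfolding msupport_def by blast
  then show False by simp
qed

lemma msupport_distr_uniform_measure:
  fixes \<gamma> :: "real \<Rightarrow> real^2"
  assumes cont: "continuous_on UNIV \<gamma>" and t: "a \<le> t" "t < b"
  shows "\<gamma> t \<in> msupport (distr (uniform_measure lborel {a..<b}) borel \<gamma>)"
  unfolding msupport_def
proof safe
  fix e :: real assume "e > 0"
  then obtain \<delta> where "\<delta> > 0" and \<delta>: "\<And>s. dist s t < \<delta> \<Longrightarrow> dist (\<gamma> s) (\<gamma> t) < e"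
    using cont unfolding continuous_on_iff by (metis UNIV_I)
  let ?V = "\<gamma> -` ball (\<gamma> t) e"
  have V_meas: "?V \<in> sets lborel"
    using borel_measurable_continuous_onI[OF cont] by (simp add: measurable_sets_borel)
  have "0 < emeasure lborel {t..<min (t + \<delta>) b}"
    using t \<open>\<delta> > 0\<close> by simp
  also have "\<dots> \<le> emeasure lborel ({a..<b} \<inter> ?V)"
    using t \<delta> V_meas by (intro emeasure_mono) (auto simp: dist_real_def dist_commute)
  finally have "0 < emeasure lborel ({a..<b} \<inter> ?V)" .
  moreover have "emeasure (distr (uniform_measure lborel {a..<b}) borel \<gamma>) (ball (\<gamma> t) e)
      = emeasure lborel ({a..<b} \<inter> ?V) / emeasure lborel {a..<b}"
    using V_meas borel_measurable_continuous_onI[OF cont] by (simp add: emeasure_distr)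
  ultimately show "0 < emeasure (distr (uniform_measure lborel {a..<b}) borel \<gamma>) (ball (\<gamma> t) e)"
    using t by (simp add: ennreal_zero_less_divide)
qed

definition circle_point :: "real \<Rightarrow> real \<Rightarrow> real^2" where
  "circle_point R \<phi> = vector [R * cos \<phi>, R * sin \<phi>]"

definition chord_length :: "real \<Rightarrow> real \<Rightarrow> real" where
  "chord_length R \<psi> = R * sqrt ((1 - cos \<psi>)^2 + (sin \<psi>)^2)"

lemma norm_vec2: "norm (x::real^2) = sqrt (x$1^2 + x$2^2)"
  by (simp add: norm_vec_def L2_set_def sum_2)

lemma circle_point_diff:
  "circle_point R \<theta> - circle_point R \<phi> = R *\<^sub>R ((1 - cos (\<phi> - \<theta>)) *\<^sub>R vector [cos \<theta>, sin \<theta>]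
     + sin (\<phi> - \<theta>) *\<^sub>R vector [sin \<theta>, - cos \<theta>])"
proof -
  have "cos \<theta> - cos \<phi> = (1 - cos (\<phi> - \<theta>)) * cos \<theta> + sin (\<phi> - \<theta>) * sin \<theta>"
    "sin \<theta> - sin \<phi> = (1 - cos (\<phi> - \<theta>)) * sin \<theta> - sin (\<phi> - \<theta>) * cos \<theta>"
    using sin_cos_squared_add[of \<theta>] unfolding cos_diff sin_diff by algebra+
  then show ?thesis
    by (simp add: circle_point_def vec_eq_iff forall_2 right_diff_distrib[symmetric] distrib_left[symmetric])
qed

lemma norm_circle_point_diff:
  assumes "R \<ge> 0"
  shows "norm (circle_point R \<theta> - circle_point R \<phi>) = chord_length R (\<phi> - \<theta>)"
proof -
  have "(1 - cos \<psi>)^2 + (sin \<psi>)^2 = 2 - 2 * cos \<psi>" for \<psi> :: real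
    using sin_cos_squared_add[of \<psi>] by algebra
  moreover have "(R * cos \<theta> - R * cos \<phi>)^2 + (R * sin \<theta> - R * sin \<phi>)^2 = R^2 * (2 - 2 * cos (\<phi> - \<theta>))"
    using sin_cos_squared_add[of \<theta>] sin_cos_squared_add[of \<phi>] unfolding cos_diff by algebra
  ultimately show ?thesis
    using assms by (simp add: norm_vec2 circle_point_def chord_length_def real_sqrt_mult)
qed

lemma continuous_on_circle_point: "continuous_on UNIV (circle_point R)"
proof -
  have "circle_point R = (\<lambda>\<phi>. (R * cos \<phi>) *\<^sub>R axis 1 1 + (R * sin \<phi>) *\<^sub>R axis 2 1)"
    by (simp add: circle_point_def vec_eq_iff forall_2 axis_def fun_eq_iff)
  then show ?thesis by (simp add: continuous_intros)
qed

lemma borel_measurable_circle_point [measurable]: "circle_point R \<in> borel_measurable borel"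
  by (rule borel_measurable_continuous_onI[OF continuous_on_circle_point])

lemma continuous_on_radial_field:
  assumes "continuous_on {0..} g"
  shows "continuous_on UNIV (\<lambda>d::'a::real_normed_vector. g (norm d) *\<^sub>R d)"
  by (intro continuous_intros continuous_on_compose2[OF assms]) auto

lemma Tmat_1_mult_vec: "Tmat 1 *v d = d"
  by (simp add: Tmat_def outer_def vec_s_def vec_l_def vec_eq_iff forall_2
      matrix_vector_mult_def sum_2)

lemma Fforce_Tmat_1: "Fforce fA fR (Tmat 1) d = (fA (norm d) + fR (norm d)) *\<^sub>R d"
  by (simp add: Fforce_def Tmat_1_mult_vec algebra_simps)

lemma radial_field_circle_point_diff:
  assumes "R \<ge> 0"
  shows "g (norm (circle_point R \<theta> - circle_point R \<phi>)) *\<^sub>R (circle_point R \<theta> - circle_point R \<phi>)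
    = R *\<^sub>R ((g (chord_length R (\<phi> - \<theta>)) * (1 - cos (\<phi> - \<theta>))) *\<^sub>R vector [cos \<theta>, sin \<theta>]
       + (g (chord_length R (\<phi> - \<theta>)) * sin (\<phi> - \<theta>)) *\<^sub>R vector [sin \<theta>, - cos \<theta>])"
  unfolding norm_circle_point_diff[OF assms] by (subst circle_point_diff) (simp add: algebra_simps)

lemma integral_radial_field_on_circle:
  assumes g: "continuous_on {0..} g" and "R \<ge> 0" and \<theta>: "0 \<le> \<theta>" "\<theta> \<le> 2*pi"
  shows "integral\<^sup>L (uniform_measure lborel {0..<2*pi})
           (\<lambda>\<phi>. g (norm (circle_point R \<theta> - circle_point R \<phi>)) *\<^sub>R (circle_point R \<theta> - circle_point R \<phi>))
       = (R * integral {0..pi} (\<lambda>\<psi>. g (chord_length R \<psi>) * (1 - cos \<psi>)) / pi) *\<^sub>R vector [cos \<theta>, sin \<theta>]"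
proof -
  let ?u = "vector [cos \<theta>, sin \<theta>] :: real^2"
  let ?w = "vector [sin \<theta>, - cos \<theta>] :: real^2"
  define p where "p \<psi> = g (chord_length R \<psi>) * (1 - cos \<psi>)" for \<psi>
  define q where "q \<psi> = g (chord_length R \<psi>) * sin \<psi>" for \<psi>
  have "continuous_on UNIV (\<lambda>\<psi>. g (chord_length R \<psi>))"
    unfolding chord_length_def using \<open>R \<ge> 0\<close>
    by (intro continuous_on_compose2[OF g]) (auto intro!: continuous_intros)
  then have p_cont: "continuous_on UNIV p" and q_cont: "continuous_on UNIV q"
    unfolding p_def q_def by (auto intro!: continuous_intros)
  have p_per: "p (x + 2*pi) = p x" and q_per: "q (x + 2*pi) = q x" for x
    by (simp_all add: p_def q_def chord_length_def)
  have p_even: "p (-x) = 1 * p x" and q_odd: "q (-x) = -1 * q x" for x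
    by (simp_all add: p_def q_def chord_length_def)
  have "integral {0..2*pi} (\<lambda>\<phi>. p (\<phi> - \<theta>)) = 2 * integral {0..pi} p"
    using integral_periodic_shift[OF p_cont p_per \<theta>]
      integral_periodic_reflect[OF p_cont p_per p_even] by simp
  moreover have "integral {0..2*pi} (\<lambda>\<phi>. q (\<phi> - \<theta>)) = 0"
    using integral_periodic_shift[OF q_cont q_per \<theta>]
      integral_periodic_reflect[OF q_cont q_per q_odd] by simp
  moreover have "(\<lambda>\<phi>. p (\<phi> - \<theta>)) integrable_on {0..2*pi}" "(\<lambda>\<phi>. q (\<phi> - \<theta>)) integrable_on {0..2*pi}"
    by (intro integrable_continuous_interval continuous_on_compose2[OF p_cont] continuous_on_compose2[OF q_cont];
        auto intro!: continuous_intros)+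
  ultimately have has_int: "((\<lambda>\<phi>. R *\<^sub>R (p (\<phi> - \<theta>) *\<^sub>R ?u + q (\<phi> - \<theta>) *\<^sub>R ?w)) has_integral
      R *\<^sub>R ((2 * integral {0..pi} p) *\<^sub>R ?u + 0 *\<^sub>R ?w)) {0..2*pi}"
    by (intro has_integral_cmul has_integral_add has_integral_scaleR_left) (auto dest: integrable_integral)
  let ?F = "\<lambda>\<phi>. g (norm (circle_point R \<theta> - circle_point R \<phi>)) *\<^sub>R (circle_point R \<theta> - circle_point R \<phi>)"
  have F_eq: "?F = (\<lambda>\<phi>. R *\<^sub>R (p (\<phi> - \<theta>) *\<^sub>R ?u + q (\<phi> - \<theta>) *\<^sub>R ?w))"
    using radial_field_circle_point_diff[OF \<open>R \<ge> 0\<close>] by (simp add: fun_eq_iff p_def q_def)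
  have "continuous_on UNIV ?F"
    by (intro continuous_on_compose2[OF continuous_on_radial_field[OF g]]
        continuous_intros continuous_on_circle_point) auto
  then have "integral\<^sup>L (uniform_measure lborel {0..<2*pi}) ?F = (1 / (2*pi)) *\<^sub>R integral {0..2*pi} ?F"
    by (simp add: integral_uniform_measure_interval)
  also have "integral {0..2*pi} ?F = (2 * R * integral {0..pi} p) *\<^sub>R ?u"
    unfolding F_eq using integral_unique[OF has_int] by simp
  finally show ?thesis
    by (simp add: p_def[abs_def])
qed

lemma borel_measurable_Kfield:
  assumes "sigma_finite_measure \<mu>" and sets_\<mu>: "sets \<mu> = sets borel"
    and "Fforce fA fR T \<in> borel_measurable borel"
  shows "Kfield fA fR T \<mu> \<in> borel_measurable borel"
proof -
  interpret sigma_finite_measure \<mu> by fact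
  have "(\<lambda>(x, y). Fforce fA fR T (x - y)) \<in> borel_measurable (borel \<Otimes>\<^sub>M \<mu>)"
    using assms by (simp add: measurable_cong_sets[OF sets_pair_measure_cong[OF refl sets_\<mu>] refl])
  then show ?thesis
    unfolding Kfield_def by (rule borel_measurable_lebesgue_integral)
qed

lemma equilibrium_state_iff_AE_Kfield_zero:
  assumes prob: "prob_space \<mu>" and sets_\<mu>: "sets \<mu> = sets borel"
    and F_meas: "Fforce fA fR T \<in> borel_measurable borel"
    and F_int: "AE x in \<mu>. integrable \<mu> (\<lambda>y. Fforce fA fR T (x - y))"
    and supp: "AE x in \<mu>. x \<in> msupport \<mu>"
  shows "equilibrium_state fA fR T \<mu> \<longleftrightarrow> (AE x in \<mu>. Kfield fA fR T \<mu> x = 0)"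
proof
  assume "equilibrium_state fA fR T \<mu>"
  then have "AE x in \<mu>. x \<in> msupport \<mu> \<longrightarrow> Kfield fA fR T \<mu> x = 0"
    by (simp add: equilibrium_state_def)
  with supp show "AE x in \<mu>. Kfield fA fR T \<mu> x = 0"
    by eventually_elim simp
next
  assume K0: "AE x in \<mu>. Kfield fA fR T \<mu> x = 0"
  interpret prob_space \<mu> by (rule prob)
  have K_meas: "Kfield fA fR T \<mu> \<in> borel_measurable borel"
    using sigma_finite_measure sets_\<mu> F_meas by (rule borel_measurable_Kfield)
  have "set_integrable \<mu> C (Kfield fA fR T \<mu>)" if "compact C" for C
    unfolding set_integrable_def
  proof (rule integrable_const_bound[where B=0])
    show "AE x in \<mu>. norm (indicator C x *\<^sub>R Kfield fA fR T \<mu> x) \<le> 0"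
      using K0 by eventually_elim simp
    show "(\<lambda>x. indicator C x *\<^sub>R Kfield fA fR T \<mu> x) \<in> borel_measurable \<mu>"
      using K_meas borel_compact[OF \<open>compact C\<close>] sets_\<mu> by measurable
  qed
  with prob sets_\<mu> F_int K0 show "equilibrium_state fA fR T \<mu>"
    unfolding equilibrium_state_def by (auto elim: AE_mp)
qed

lemma ring_state_eq_distr:
  "ellipse_state R 0 = distr (uniform_measure lborel {0..<2*pi}) borel (circle_point R)"
  by (simp add: ellipse_state_def circle_point_def[abs_def])

lemma prob_space_ring_state: "prob_space (ellipse_state R 0)"
  unfolding ring_state_eq_distr
  by (intro prob_space.prob_space_distr prob_space_uniform_measure) auto

lemma AE_in_msupport_ring_state: "AE x in ellipse_state R 0. x \<in> msupport (ellipse_state R 0)"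
proof -
  let ?U = "uniform_measure lborel {0..<2*pi}"
  have "AE \<phi> in ?U. circle_point R \<phi> \<in> msupport (ellipse_state R 0)"
    unfolding ring_state_eq_distr
    by (rule AE_uniform_measureI) (auto intro: msupport_distr_uniform_measure continuous_on_circle_point)
  moreover have "msupport (ellipse_state R 0) \<in> sets borel"
    using closed_msupport[of "ellipse_state R 0"] by (simp add: ring_state_eq_distr borel_closed)
  ultimately have "AE x in distr ?U borel (circle_point R). x \<in> msupport (ellipse_state R 0)"
    by (subst AE_distr_iff) auto
  then show ?thesis
    by (subst ring_state_eq_distr)
qed

lemma nontrivial_ring_state:
  assumes "R \<noteq> 0"
  shows "nontrivial_state (ellipse_state R 0)"
  unfolding nontrivial_state_def
proof
  assume "\<exists>p. ellipse_state R 0 = return borel p"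
  then obtain p where p: "ellipse_state R 0 = return borel p" ..
  have "circle_point R \<phi> = p" if "0 \<le> \<phi>" "\<phi> < 2*pi" for \<phi>
    using msupport_distr_uniform_measure[OF continuous_on_circle_point that, of R] p
    by (simp add: ring_state_eq_distr msupport_return_borel)
  from this[of 0] this[of pi] have "circle_point R 0 = circle_point R pi" by simp
  with assms show False
    by (simp add: circle_point_def vec_eq_iff forall_2)
qed

lemma equilibrium_ring_state_iff:
  assumes F_cont: "continuous_on UNIV (Fforce fA fR T)"
  shows "equilibrium_state fA fR T (ellipse_state R 0) \<longleftrightarrow>
    (AE \<phi> in uniform_measure lborel {0..<2*pi}. Kfield fA fR T (ellipse_state R 0) (circle_point R \<phi>) = 0)"
proof -
  let ?\<mu> = "ellipse_state R 0"
  have [measurable]: "Fforce fA fR T \<in> borel_measurable borel"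
    using F_cont by (rule borel_measurable_continuous_onI)
  have K_meas: "Kfield fA fR T ?\<mu> \<in> borel_measurable borel"
    using prob_space_imp_sigma_finite[OF prob_space_ring_state]
    by (rule borel_measurable_Kfield) (simp_all add: ring_state_eq_distr)
  have "integrable (uniform_measure lborel {0..<2*pi}) (\<lambda>\<phi>. Fforce fA fR T (x - circle_point R \<phi>))" for x
    by (intro integrable_uniform_measure_interval continuous_on_compose2[OF F_cont]
        continuous_intros continuous_on_circle_point) auto
  then have "integrable ?\<mu> (\<lambda>y. Fforce fA fR T (x - y))" for x
    by (simp add: ring_state_eq_distr integrable_distr_eq)
  then have "equilibrium_state fA fR T ?\<mu> \<longleftrightarrow> (AE x in ?\<mu>. Kfield fA fR T ?\<mu> x = 0)"
    by (intro equilibrium_state_iff_AE_Kfield_zero prob_space_ring_state AE_in_msupport_ring_state)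
      (simp_all add: ring_state_eq_distr)
  also have "\<dots> \<longleftrightarrow> (AE \<phi> in uniform_measure lborel {0..<2*pi}. Kfield fA fR T ?\<mu> (circle_point R \<phi>) = 0)"
    using K_meas by (subst (1) ring_state_eq_distr, subst AE_distr_iff) simp_all
  finally show ?thesis .
qed

lemma Kfield_ring_state_on_circle:
  assumes g_cont: "continuous_on {0..} (\<lambda>\<rho>. fA \<rho> + fR \<rho>)" and "R \<ge> 0" and "0 \<le> \<theta>" "\<theta> \<le> 2*pi"
  shows "Kfield fA fR (Tmat 1) (ellipse_state R 0) (circle_point R \<theta>)
    = (R * integral {0..pi} (\<lambda>\<psi>. (fA (chord_length R \<psi>) + fR (chord_length R \<psi>)) * (1 - cos \<psi>)) / pi)
        *\<^sub>R vector [cos \<theta>, sin \<theta>]"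
proof -
  have [measurable]: "Fforce fA fR (Tmat 1) \<in> borel_measurable borel"
    using borel_measurable_continuous_onI[OF continuous_on_radial_field[OF g_cont]]
    by (simp add: Fforce_Tmat_1[abs_def])
  have "Kfield fA fR (Tmat 1) (ellipse_state R 0) (circle_point R \<theta>)
      = integral\<^sup>L (uniform_measure lborel {0..<2*pi}) (\<lambda>\<phi>. Fforce fA fR (Tmat 1) (circle_point R \<theta> - circle_point R \<phi>))"
    unfolding Kfield_def ring_state_eq_distr by (rule integral_distr) measurable
  then show ?thesis
    using integral_radial_field_on_circle[OF g_cont assms(2-4)] by (simp add: Fforce_Tmat_1)
qed

lemma smooth_on_real_imp_continuous_on: "smooth_on_real S f \<Longrightarrow> continuous_on S f"
  unfolding smooth_on_real_def continuous_on_eq_continuous_within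
  by (metis DERIV_continuous)

theorem lemma3p4:
  fixes fA fR :: "real \<Rightarrow> real" and d_a d_e R :: real
    and F' :: "(real^2) \<times> real \<Rightarrow> (((real^2) \<times> real) \<Rightarrow>\<^sub>L (real^2))"
  assumes smoothA: "smooth_on_real {0..} fA" and smoothR: "smooth_on_real {0..} fR"
    and intA: "set_integrable lborel {0..} fA" and intR: "set_integrable lborel {0..} fR"
    and fR_nonneg: "\<And>\<rho>. \<rho> \<ge> 0 \<Longrightarrow> fR \<rho> \<ge> 0"
    and fA_nonpos: "\<And>\<rho>. \<rho> \<ge> 0 \<Longrightarrow> fA \<rho> \<le> 0"
    and da_pos: "d_a > 0"
    and sum_neg: "\<And>\<rho>. \<rho> > d_a \<Longrightarrow> fA \<rho> + fR \<rho> \<le> 0"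
    and sum_pos: "\<And>\<rho>. 0 \<le> \<rho> \<Longrightarrow> \<rho> < d_a \<Longrightarrow> fA \<rho> + fR \<rho> > 0"
    and F_deriv: "\<And>p. p \<in> UNIV \<times> {0..1} \<Longrightarrow>
        ((\<lambda>q. Fforce fA fR (Tmat (snd q)) (fst q)) has_derivative blinfun_apply (F' p))
          (at p within UNIV \<times> {0..1})"
    and F_deriv_cont: "continuous_on (UNIV \<times> {0..1}) F'"
    and F_deriv_bdd: "\<exists>B. \<forall>p\<in>UNIV \<times> {0..1}. norm (F' p) \<le> B"
    and de: "d_e > d_a"
    and decr: "\<And>chi. chi \<in> {0..1} \<Longrightarrow> strict_antimono_on {0..d_e} (\<lambda>\<rho>. chi * fA \<rho> + fR \<rho>)"
    and R_pos: "R > 0"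
  shows "(equilibrium_state fA fR (Tmat 1) (ellipse_state R 0) \<and> nontrivial_state (ellipse_state R 0))
     \<longleftrightarrow> integral {0..pi} (\<lambda>\<phi>. (fA (R * sqrt ((1 - cos \<phi>)^2 + (sin \<phi>)^2)) + fR (R * sqrt ((1 - cos \<phi>)^2 + (sin \<phi>)^2))) * (1 - cos \<phi>)) = 0"
proof -
  define I where "I = integral {0..pi} (\<lambda>\<psi>. (fA (chord_length R \<psi>) + fR (chord_length R \<psi>)) * (1 - cos \<psi>))"
  have g_cont: "continuous_on {0..} (\<lambda>\<rho>. fA \<rho> + fR \<rho>)"
    using smooth_on_real_imp_continuous_on[OF smoothA] smooth_on_real_imp_continuous_on[OF smoothR]
    by (intro continuous_intros)
  have F_cont: "continuous_on UNIV (Fforce fA fR (Tmat 1))"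
    using continuous_on_radial_field[OF g_cont] by (simp add: Fforce_Tmat_1[abs_def])
  have "Kfield fA fR (Tmat 1) (ellipse_state R 0) (circle_point R \<phi>) = 0 \<longleftrightarrow> I = 0"
    if "\<phi> \<in> {0..<2*pi}" for \<phi>
  proof -
    have "norm (vector [cos \<phi>, sin \<phi>] :: real^2) = 1"
      by (simp add: norm_vec2)
    with that R_pos show ?thesis
      by (auto simp: Kfield_ring_state_on_circle[OF g_cont] I_def simp del: vector_2)
  qed
  then have "equilibrium_state fA fR (Tmat 1) (ellipse_state R 0) \<longleftrightarrow> I = 0"
    unfolding equilibrium_ring_state_iff[OF F_cont] by (intro AE_uniform_measure_interval_iff) simp_all
  with nontrivial_ring_state[of R] R_pos show ?thesis
    unfolding I_def chord_length_def by simp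
qed

end
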